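(* The homomorphism $\mu:\mathrm{PSL}(2,\mathbb{Z})\to\mathrm{PGL}(2,\mathbb{Z}[t,t^{-1},(1+t)^{-1}])$ is injective.
   Context: Matrices in square brackets denote their classes in projective linear groups (quotients of $\mathrm{GL}_2$ by unit scalars). $\mu$ is the group homomorphism determined by $\mu\left[\begin{smallmatrix}1&0\\1&1\end{smallmatrix}\right]=\left[\begin{smallmatrix}1&0\\0&-t\end{smallmatrix}\right]$ and $\mu\left[\begin{smallmatrix}1&-1\\0&1\end{smallmatrix}\right]=\left[\begin{smallmatrix}-\frac{t^2}{1+t}&\frac{t}{1+t}\\ \frac{1+t+t^2}{1+t}&\frac{1}{1+t}\end{smallmatrix}\right]$ (these images satisfy the defining relations $s_1s_2s_1=s_2s_1s_2$, $(s_1s_2s_1)^2=1$ of $\mathrm{PSL}(2,\mathbb{Z})$ with $s_1=\left[\begin{smallmatrix}1&-1\\0&1\end{smallmatrix}\right]$, $s_2=\left[\begin{smallmatrix}1&0\\1&1\end{smallmatrix}\right]$, so $\mu$ is well defined). *)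

theory Defs
  imports Main "HOL-Computational_Algebra.Polynomial" "HOL-Computational_Algebra.Fraction_Field"
begin

text \<open>2x2 matrices over a ring, written as (a, b, c, d) for [[a, b], [c, d]].\<close>
type_synonym 'a mat2 = "'a \<times> 'a \<times> 'a \<times> 'a"

fun mmul :: "'a::comm_ring_1 mat2 \<Rightarrow> 'a mat2 \<Rightarrow> 'a mat2" where
  "mmul (a, b, c, d) (e, f, g, h) = (a*e + b*g, a*f + b*h, c*e + d*g, c*f + d*h)"

definition mid :: "'a::comm_ring_1 mat2" where
  "mid = (1, 0, 0, 1)"

fun msmult :: "'a::comm_ring_1 \<Rightarrow> 'a mat2 \<Rightarrow> 'a mat2" where
  "msmult k (a, b, c, d) = (k*a, k*b, k*c, k*d)"

fun minv :: "'a::field mat2 \<Rightarrow> 'a mat2" where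
  "minv (a, b, c, d) = (let D = a*d - b*c in (d/D, -b/D, -c/D, a/D))"

text \<open>Words in the generators s1, s2 of PSL(2,Z) and their inverses.
  Every element of PSL(2,Z) is the class of the value of such a word.\<close>
datatype gen = S1 | S1inv | S2 | S2inv

fun gen_Z :: "gen \<Rightarrow> int mat2" where
  "gen_Z S1 = (1, -1, 0, 1)"
| "gen_Z S1inv = (1, 1, 0, 1)"
| "gen_Z S2 = (1, 0, 1, 1)"
| "gen_Z S2inv = (1, 0, -1, 1)"

definition evalZ :: "gen list \<Rightarrow> int mat2" where
  "evalZ w = foldr (\<lambda>g M. mmul (gen_Z g) M) w mid"

text \<open>Equality in PSL(2,Z) = SL(2,Z)/{+-1}.\<close>
definition psl_eq :: "int mat2 \<Rightarrow> int mat2 \<Rightarrow> bool" where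
  "psl_eq A B \<longleftrightarrow> A = B \<or> A = msmult (-1) B"

text \<open>The field Q(t) realised as the fraction field of Z[t], and the variable t.\<close>
type_synonym rf = "int poly fract"

definition tt :: rf where
  "tt = Fract [:0, 1:] 1"

text \<open>The ring R = Z[t, t^-1, (1+t)^-1] as a subring of the fraction field of Z[t].\<close>
definition Rring :: "rf set" where
  "Rring = {Fract p 1 / (tt ^ a * (1 + tt) ^ b) | p a b. True}"

definition R_unit :: "rf \<Rightarrow> bool" where
  "R_unit u \<longleftrightarrow> u \<in> Rring \<and> inverse u \<in> Rring \<and> u \<noteq> 0"

definition mu_s1 :: "rf mat2" where
  "mu_s1 = (- (tt ^ 2) / (1 + tt), tt / (1 + tt), (1 + tt + tt ^ 2) / (1 + tt), 1 / (1 + tt))"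

definition mu_s2 :: "rf mat2" where
  "mu_s2 = (1, 0, 0, - tt)"

fun gen_mu :: "gen \<Rightarrow> rf mat2" where
  "gen_mu S1 = mu_s1"
| "gen_mu S1inv = minv mu_s1"
| "gen_mu S2 = mu_s2"
| "gen_mu S2inv = minv mu_s2"

definition evalMu :: "gen list \<Rightarrow> rf mat2" where
  "evalMu w = foldr (\<lambda>g M. mmul (gen_mu g) M) w mid"

text \<open>Equality in PGL(2,R) = GL(2,R)/R^*: matrices differ by a unit scalar of R.\<close>
definition pgl_eq :: "rf mat2 \<Rightarrow> rf mat2 \<Rightarrow> bool" where
  "pgl_eq A B \<longleftrightarrow> (\<exists>u. R_unit u \<and> A = msmult u B)"

end

theory Submission
  imports Defs "HOL-Computational_Algebra.Polynomial_Factorial"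
begin

text \<open>PSL(2,Z) is the free product of the involution a = s1 s2 s1 and the element b = s1 s2
  of order three, so every element is represented by a unique reduced word alternating between
  a and b, b^-1; any projective representation in which a^2 and b^3 are
  scalars sends a word and its reduced form to the same class. After clearing denominators \<mu>
  is given by matrices over Z[t]. If \<mu>(w) and \<mu>(v) agree projectively, then the vectors
  \<mu>(w)(1,1) and \<mu>(v)(1,1) are parallel; this is a polynomial identity in t and therefore
  survives the specialisation t = -2. There the images of a, b, b^-1 play ping-pong
  on three disjoint cones of the plane, none containing (1,1), so parallel images of (1,1)
  force the reduced words of w and v to agree.\<close>

lemma mmul_assoc: "mmul (mmul A B) C = mmul A (mmul B C)"
  by (cases A; cases B; cases C) (simp add: algebra_simps)

lemma mmul_msmult_left: "mmul (msmult k A) B = msmult k (mmul A B)"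
  by (cases A; cases B) (simp add: algebra_simps)

lemma mmul_msmult_right: "mmul A (msmult k B) = msmult k (mmul A B)"
  by (cases A; cases B) (simp add: algebra_simps)

lemma msmult_msmult: "msmult k (msmult l A) = msmult (k * l) A"
  by (cases A) (simp add: algebra_simps)

lemma msmult_1 [simp]: "msmult 1 A = A"
  by (cases A) simp

lemma mmul_mid_left [simp]: "mmul mid A = A"
  by (cases A) (simp add: mid_def)

lemma mmul_mid_right [simp]: "mmul A mid = A"
  by (cases A) (simp add: mid_def)

definition eval_word :: "('b \<Rightarrow> 'a::comm_ring_1 mat2) \<Rightarrow> 'b list \<Rightarrow> 'a mat2" where
  "eval_word f xs = foldr (\<lambda>x M. mmul (f x) M) xs mid"

lemma eval_word_Nil [simp]: "eval_word f [] = mid"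
  by (simp add: eval_word_def)

lemma eval_word_Cons [simp]: "eval_word f (x # xs) = mmul (f x) (eval_word f xs)"
  by (simp add: eval_word_def)

lemma eval_word_append: "eval_word f (xs @ ys) = mmul (eval_word f xs) (eval_word f ys)"
  by (induction xs) (simp_all add: mmul_assoc)

lemma evalZ_eq_eval_word: "evalZ = eval_word gen_Z"
  by (simp add: fun_eq_iff evalZ_def eval_word_def)

lemma evalMu_eq_eval_word: "evalMu = eval_word gen_mu"
  by (simp add: fun_eq_iff evalMu_def eval_word_def)

text \<open>Scalars on both sides, since S (e.g. the nonzero integers) need not be closed under
  inverses.\<close>

definition proj_equiv :: "('a::comm_ring_1 \<Rightarrow> bool) \<Rightarrow> 'a mat2 \<Rightarrow> 'a mat2 \<Rightarrow> bool" where
  "proj_equiv S X Y \<longleftrightarrow> (\<exists>k l. S k \<and> S l \<and> msmult k X = msmult l Y)"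

lemma proj_equiv_refl: "S 1 \<Longrightarrow> proj_equiv S X X"
  unfolding proj_equiv_def by blast

lemma proj_equiv_sym: "proj_equiv S X Y \<Longrightarrow> proj_equiv S Y X"
  unfolding proj_equiv_def by metis

lemma proj_equiv_trans:
  assumes S_mult: "\<And>a b. S a \<Longrightarrow> S b \<Longrightarrow> S (a * b)"
    and "proj_equiv S X Y" "proj_equiv S Y Z"
  shows "proj_equiv S X Z"
proof -
  obtain k l where kl: "S k" "S l" "msmult k X = msmult l Y"
    using assms(2) unfolding proj_equiv_def by blast
  obtain k' l' where kl': "S k'" "S l'" "msmult k' Y = msmult l' Z"
    using assms(3) unfolding proj_equiv_def by blast
  have "msmult (k' * k) X = msmult (l * l') Z"
    by (metis kl(3) kl'(3) msmult_msmult mult.commute)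
  then show ?thesis
    unfolding proj_equiv_def using kl kl' S_mult by blast
qed

lemma proj_equiv_mmul_left: "proj_equiv S X Y \<Longrightarrow> proj_equiv S (mmul M X) (mmul M Y)"
  unfolding proj_equiv_def by (metis mmul_msmult_right)

lemma proj_equiv_mmul_right: "proj_equiv S X Y \<Longrightarrow> proj_equiv S (mmul X M) (mmul Y M)"
  unfolding proj_equiv_def by (metis mmul_msmult_left)

datatype letter = LA | LB | LB_inv

fun letter_mult :: "letter \<Rightarrow> letter list \<Rightarrow> letter list" where
  "letter_mult LA (LA # r) = r"
| "letter_mult LA r = LA # r"
| "letter_mult LB (LB # r) = LB_inv # r"
| "letter_mult LB (LB_inv # r) = r"
| "letter_mult LB r = LB # r"
| "letter_mult LB_inv (LB_inv # r) = LB # r"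
| "letter_mult LB_inv (LB # r) = r"
| "letter_mult LB_inv r = LB_inv # r"

lemma letter_mult_Cons: "letter_mult x (y # r) = letter_mult x [y] @ r"
  by (cases x; cases y) simp_all

definition reduced :: "letter list \<Rightarrow> bool" where
  "reduced n \<longleftrightarrow> successively (\<lambda>x y. (x = LA) \<noteq> (y = LA)) n"

lemma reduced_ConsD: "reduced (x # n) \<Longrightarrow> reduced n"
  by (cases n) (simp_all add: reduced_def)

lemma reduced_letter_mult: "reduced n \<Longrightarrow> reduced (letter_mult x n)"
  by (induction x n rule: letter_mult.induct) (auto simp: reduced_def successively_Cons)

text \<open>With a = s1 s2 s1 and b = s1 s2 one has s1 = b^-1 a and s2 = a b^-1.\<close>

fun gen_letters :: "gen \<Rightarrow> letter list" where
  "gen_letters S1 = [LB_inv, LA]"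
| "gen_letters S1inv = [LA, LB]"
| "gen_letters S2 = [LA, LB_inv]"
| "gen_letters S2inv = [LB, LA]"

definition normal_form :: "gen list \<Rightarrow> letter list" where
  "normal_form w = foldr (\<lambda>g n. foldr letter_mult (gen_letters g) n) w []"

lemma reduced_normal_form: "reduced (normal_form w)"
proof (induction w)
  case (Cons g w)
  then show ?case
    by (cases g) (simp_all add: normal_form_def reduced_letter_mult)
qed (simp add: normal_form_def reduced_def)

locale Z2_Z3_proj_rep =
  fixes S :: "'a::comm_ring_1 \<Rightarrow> bool" and L :: "letter \<Rightarrow> 'a mat2" and G :: "gen \<Rightarrow> 'a mat2"
  assumes S_1: "S 1"
    and S_mult: "S a \<Longrightarrow> S b \<Longrightarrow> S (a * b)"
    and letter_rel: "proj_equiv S (eval_word L (letter_mult x [y])) (mmul (L x) (L y))"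
    and gen_rel: "proj_equiv S (eval_word L (gen_letters g)) (G g)"
begin

lemma equiv_trans: "proj_equiv S X Y \<Longrightarrow> proj_equiv S Y Z \<Longrightarrow> proj_equiv S X Z"
  by (rule proj_equiv_trans[of S, OF S_mult])

lemma eval_letter_mult: "proj_equiv S (eval_word L (letter_mult x n)) (mmul (L x) (eval_word L n))"
proof (cases n)
  case Nil
  then show ?thesis
    by (cases x) (simp_all add: proj_equiv_refl S_1)
next
  case (Cons y r)
  have "proj_equiv S (mmul (eval_word L (letter_mult x [y])) (eval_word L r))
      (mmul (mmul (L x) (L y)) (eval_word L r))"
    by (intro proj_equiv_mmul_right letter_rel)
  moreover have "eval_word L (letter_mult x (y # r))
      = mmul (eval_word L (letter_mult x [y])) (eval_word L r)"
    by (subst letter_mult_Cons) (rule eval_word_append)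
  ultimately show ?thesis
    using Cons by (simp add: mmul_assoc)
qed

lemma eval_letters_mult:
  "proj_equiv S (eval_word L (foldr letter_mult xs n)) (mmul (eval_word L xs) (eval_word L n))"
proof (induction xs)
  case Nil
  then show ?case by (simp add: proj_equiv_refl S_1)
next
  case (Cons x xs)
  have "proj_equiv S (mmul (L x) (eval_word L (foldr letter_mult xs n)))
      (mmul (L x) (mmul (eval_word L xs) (eval_word L n)))"
    by (intro proj_equiv_mmul_left Cons.IH)
  then show ?case
    using equiv_trans[OF eval_letter_mult] by (simp add: mmul_assoc)
qed

lemma eval_normal_form: "proj_equiv S (eval_word L (normal_form w)) (eval_word G w)"
proof (induction w)
  case Nil
  then show ?case by (simp add: normal_form_def proj_equiv_refl S_1)
next
  case (Cons g w)
  have "proj_equiv S (mmul (eval_word L (gen_letters g)) (eval_word L (normal_form w)))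
      (mmul (G g) (eval_word G w))"
    by (rule equiv_trans[OF proj_equiv_mmul_right[OF gen_rel] proj_equiv_mmul_left[OF Cons.IH]])
  then show ?case
    using equiv_trans[OF eval_letters_mult] by (simp add: normal_form_def)
qed

end

lemma psl_eq_iff_proj_equiv: "psl_eq X Y \<longleftrightarrow> proj_equiv (\<lambda>k::int. k = 1 \<or> k = -1) X Y"
proof
  assume "proj_equiv (\<lambda>k::int. k = 1 \<or> k = -1) X Y"
  then obtain k l :: int where "k = 1 \<or> k = -1" "l = 1 \<or> l = -1" "msmult k X = msmult l Y"
    unfolding proj_equiv_def by blast
  then show "psl_eq X Y"
    unfolding psl_eq_def by (auto simp: msmult_msmult dest: arg_cong[where f = "msmult (-1)"])
next
  assume "psl_eq X Y"
  then show "proj_equiv (\<lambda>k::int. k = 1 \<or> k = -1) X Y"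
    unfolding psl_eq_def proj_equiv_def by (metis msmult_1 msmult_msmult mult_minus1)
qed

fun letter_Z :: "letter \<Rightarrow> int mat2" where
  "letter_Z LA = (0, -1, 1, 0)"
| "letter_Z LB = (0, -1, 1, 1)"
| "letter_Z LB_inv = (1, 1, -1, 0)"

interpretation psl: Z2_Z3_proj_rep "\<lambda>k::int. k = 1 \<or> k = -1" letter_Z gen_Z
proof unfold_locales
  fix x y g
  show "proj_equiv (\<lambda>k::int. k = 1 \<or> k = -1) (eval_word letter_Z (letter_mult x [y]))
      (mmul (letter_Z x) (letter_Z y))"
    by (cases x; cases y) (simp_all add: psl_eq_iff_proj_equiv[symmetric] psl_eq_def mid_def)
  show "proj_equiv (\<lambda>k::int. k = 1 \<or> k = -1) (eval_word letter_Z (gen_letters g)) (gen_Z g)"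
    by (cases g) (simp_all add: psl_eq_iff_proj_equiv[symmetric] psl_eq_def mid_def)
qed auto

lemma psl_eq_if_normal_form_eq:
  assumes "normal_form w = normal_form v"
  shows "psl_eq (evalZ w) (evalZ v)"
proof -
  have "proj_equiv (\<lambda>k::int. k = 1 \<or> k = -1) (eval_word gen_Z w) (eval_word letter_Z (normal_form v))"
    using proj_equiv_sym[OF psl.eval_normal_form[of w]] assms by simp
  then show ?thesis
    unfolding psl_eq_iff_proj_equiv evalZ_eq_eval_word using psl.equiv_trans psl.eval_normal_form by blast
qed

fun mat2_apply :: "'a::comm_ring_1 mat2 \<Rightarrow> 'a \<times> 'a \<Rightarrow> 'a \<times> 'a" where
  "mat2_apply (a, b, c, d) (x, y) = (a * x + b * y, c * x + d * y)"

fun mdet :: "'a::comm_ring_1 mat2 \<Rightarrow> 'a" where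
  "mdet (a, b, c, d) = a * d - b * c"

fun wedge :: "'a::comm_ring_1 \<times> 'a \<Rightarrow> 'a \<times> 'a \<Rightarrow> 'a" where
  "wedge (a, b) (c, d) = a * d - b * c"

lemma wedge_self [simp]: "wedge v v = 0"
  by (cases v) (simp add: mult.commute)

lemma wedge_eq_0_commute: "wedge v v' = 0 \<longleftrightarrow> wedge v' v = 0"
  by (cases v; cases v') (auto simp: mult.commute)

lemma mat2_apply_mmul: "mat2_apply (mmul A B) v = mat2_apply A (mat2_apply B v)"
  by (cases A; cases B; cases v) (simp add: algebra_simps)

lemma wedge_mat2_apply: "wedge (mat2_apply M v) (mat2_apply M v') = mdet M * wedge v v'"
  by (cases M; cases v; cases v') (simp add: algebra_simps)

lemma wedge_mat2_apply_msmult: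
  "wedge (mat2_apply (msmult k M) v) (mat2_apply (msmult l N) v)
    = k * l * wedge (mat2_apply M v) (mat2_apply N v)"
  by (cases M; cases N; cases v) (simp add: algebra_simps)

lemma wedge_eq_0_if_proj_equiv:
  fixes M M' N N' :: "'a::idom mat2"
  assumes "proj_equiv (\<lambda>k. k \<noteq> 0) M M'" "proj_equiv (\<lambda>k. k \<noteq> 0) N N'"
    and "wedge (mat2_apply M v) (mat2_apply N v) = 0"
  shows "wedge (mat2_apply M' v) (mat2_apply N' v) = 0"
proof -
  obtain k k' where k: "k \<noteq> 0" "k' \<noteq> 0" "msmult k M = msmult k' M'"
    using assms(1) unfolding proj_equiv_def by blast
  obtain l l' where l: "l \<noteq> 0" "l' \<noteq> 0" "msmult l N = msmult l' N'"
    using assms(2) unfolding proj_equiv_def by blast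
  have "k' * l' * wedge (mat2_apply M' v) (mat2_apply N' v)
      = k * l * wedge (mat2_apply M v) (mat2_apply N v)"
    by (simp only: wedge_mat2_apply_msmult[symmetric] k(3) l(3))
  then show ?thesis
    using assms(3) k l by simp
qed

definition in_double_cone :: "'a::linordered_idom \<times> 'a \<Rightarrow> 'a \<times> 'a \<Rightarrow> 'a \<times> 'a \<Rightarrow> bool" where
  "in_double_cone e e' v \<longleftrightarrow>
     (0 < wedge e v \<and> 0 < wedge v e') \<or> (wedge e v < 0 \<and> wedge v e' < 0)"

lemma wedge_pluecker:
  "wedge e v * wedge v' e' - wedge e v' * wedge v e' = - wedge e e' * wedge v v'"
  by (cases e; cases e'; cases v; cases v') (simp add: algebra_simps)

lemma eq_0_if_wedges_eq_0:
  fixes e e' v :: "'a::idom \<times> 'a"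
  assumes "wedge e e' \<noteq> 0" "wedge e v = 0" "wedge v e' = 0"
  shows "v = (0, 0)"
proof -
  have "wedge e e' * fst v = wedge v e' * fst e + wedge e v * fst e'"
    and "wedge e e' * snd v = wedge v e' * snd e + wedge e v * snd e'"
    by (cases e; cases e'; cases v; simp add: algebra_simps)+
  then show ?thesis
    using assms by (cases v) simp
qed

lemma in_double_cone_parallel:
  fixes e e' v v' :: "'a::linordered_idom \<times> 'a"
  assumes "wedge e e' \<noteq> 0" "wedge v v' = 0" "v' \<noteq> (0, 0)" "in_double_cone e e' v"
  shows "in_double_cone e e' v'"
proof -
  define F G F' G' where "F = wedge e v" "G = wedge v e'" "F' = wedge e v'" "G' = wedge v' e'"
  have cross: "F * G' = F' * G"
    using wedge_pluecker[of e v v' e'] assms(2) unfolding F_G_F'_G'_def by simp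
  have "F' \<noteq> 0 \<or> G' \<noteq> 0"
    using eq_0_if_wedges_eq_0[OF assms(1)] assms(3) unfolding F_G_F'_G'_def by blast
  moreover have "(0 < F \<and> 0 < G) \<or> (F < 0 \<and> G < 0)"
    using assms(4) unfolding in_double_cone_def F_G_F'_G'_def by simp
  ultimately have "(0 < F' \<and> 0 < G') \<or> (F' < 0 \<and> G' < 0)"
    using cross by (metis mult_less_0_iff not_less_iff_gr_or_eq zero_less_mult_iff)
  then show ?thesis
    unfolding in_double_cone_def F_G_F'_G'_def by simp
qed

fun mat2_map :: "('a \<Rightarrow> 'b) \<Rightarrow> 'a mat2 \<Rightarrow> 'b mat2" where
  "mat2_map f (a, b, c, d) = (f a, f b, f c, f d)"

locale ring_hom_fun =
  fixes f :: "'a::comm_ring_1 \<Rightarrow> 'b::comm_ring_1"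
  assumes map_add: "f (x + y) = f x + f y"
    and map_mult: "f (x * y) = f x * f y"
    and map_1: "f 1 = 1"
begin

lemma map_0: "f 0 = 0"
  using map_add[of 0 0] by simp

lemma map_diff: "f (x - y) = f x - f y"
  using map_add[of "x - y" y] by simp

lemma map_power: "f (x ^ n) = f x ^ n"
  by (induction n) (simp_all add: map_1 map_mult)

lemma mat2_map_mmul: "mat2_map f (mmul A B) = mmul (mat2_map f A) (mat2_map f B)"
  by (cases A; cases B) (simp add: map_add map_mult)

lemma mat2_map_mid: "mat2_map f mid = mid"
  by (simp add: mid_def map_0 map_1)

lemma mat2_map_eval_word: "mat2_map f (eval_word G w) = eval_word (mat2_map f \<circ> G) w"
  by (induction w) (simp_all add: mat2_map_mmul mat2_map_mid)

lemma wedge_mat2_map: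
  "wedge (mat2_apply (mat2_map f M) (1, 1)) (mat2_apply (mat2_map f N) (1, 1))
    = f (wedge (mat2_apply M (1, 1)) (mat2_apply N (1, 1)))"
  by (cases M; cases N) (simp add: map_add map_diff map_mult)

end

interpretation to_fract: ring_hom_fun to_fract
  by unfold_locales simp_all

interpretation eval_at_minus_2: ring_hom_fun "\<lambda>p :: int poly. poly p (-2)"
  by unfold_locales simp_all

definition var_t :: "int poly" where
  "var_t = [:0, 1:]"

lemma to_fract_var_t: "to_fract var_t = tt"
  by (simp add: var_t_def tt_def to_fract_def)

lemma tt_nonzero: "tt \<noteq> 0"
  by (simp add: to_fract_var_t[symmetric] var_t_def)

lemma one_plus_tt_nonzero: "1 + tt \<noteq> 0"
proof -
  have "1 + var_t = [:1, 1:]"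
    by (simp add: var_t_def one_pCons)
  then show ?thesis
    by (metis to_fract_1 to_fract_add to_fract_eq_0_iff to_fract_var_t pCons_eq_0_iff one_neq_zero)
qed

fun gen_poly :: "gen \<Rightarrow> int poly mat2" where
  "gen_poly S1 = (- (var_t ^ 2), var_t, 1 + var_t + var_t ^ 2, 1)"
| "gen_poly S1inv = (1, - var_t, - (1 + var_t + var_t ^ 2), - (var_t ^ 2))"
| "gen_poly S2 = (1, 0, 0, - var_t)"
| "gen_poly S2inv = (- var_t, 0, 0, 1)"

fun gen_mu_scale :: "gen \<Rightarrow> rf" where
  "gen_mu_scale S1 = 1 / (1 + tt)"
| "gen_mu_scale S1inv = - 1 / (tt * (1 + tt))"
| "gen_mu_scale S2 = 1"
| "gen_mu_scale S2inv = - 1 / tt"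

lemma gen_mu_scale_nonzero: "gen_mu_scale g \<noteq> 0"
  using tt_nonzero one_plus_tt_nonzero by (cases g) simp_all

lemma minv_msmult:
  fixes k :: "'a::field"
  assumes "k \<noteq> 0"
  shows "minv (msmult k A) = msmult (1 / k) (minv A)"
proof (cases A)
  case (fields a b c d)
  have "k * a * (k * d) - k * b * (k * c) = k ^ 2 * (a * d - b * c)"
    by (simp add: algebra_simps power2_eq_square)
  then show ?thesis
    using assms fields by (simp add: Let_def power2_eq_square divide_simps)
qed

lemma minv_eq_adjugate: "minv (a, b, c, d) = msmult (1 / (a * d - b * c)) (d, - b, - c, a)"
  by (simp add: Let_def)

lemma minv_mu_s1_form:
  fixes x :: "'a::field"
  assumes "x \<noteq> 0" "1 + x \<noteq> 0"
  shows "minv (msmult (1 / (1 + x)) (- (x ^ 2), x, 1 + x + x ^ 2, 1))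
      = msmult (- 1 / (x * (1 + x))) (1, - x, - (1 + x + x ^ 2), - (x ^ 2))"
    (is "minv (msmult _ ?P) = msmult _ ?adj")
proof -
  have det: "- (x ^ 2) * 1 - x * (1 + x + x ^ 2) = - x * (1 + x) ^ 2"
    by (simp add: algebra_simps power2_eq_square)
  have "(1 + x) ^ 2 \<noteq> 0"
    using assms by simp
  then have scale: "1 / (1 / (1 + x)) * (1 / (- x * (1 + x) ^ 2)) = - 1 / (x * (1 + x))"
    using assms by (simp add: divide_simps) (simp add: algebra_simps power2_eq_square)
  have "minv (msmult (1 / (1 + x)) ?P) = msmult (1 / (1 / (1 + x))) (minv ?P)"
    using assms by (simp add: minv_msmult del: minv.simps msmult.simps)
  also have "minv ?P = msmult (1 / (- x * (1 + x) ^ 2)) ?adj"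
    by (simp only: minv_eq_adjugate det)
  finally show ?thesis
    by (simp only: msmult_msmult scale)
qed

lemma mu_s1_eq_scaled_gen_poly: "mu_s1 = msmult (1 / (1 + tt)) (mat2_map to_fract (gen_poly S1))"
  by (simp add: mu_s1_def to_fract.map_power to_fract_var_t)

lemma gen_mu_eq_scaled_gen_poly:
  "gen_mu g = msmult (gen_mu_scale g) (mat2_map to_fract (gen_poly g))"
proof (cases g)
  case S1
  then show ?thesis
    by (simp only: gen_mu.simps gen_mu_scale.simps mu_s1_eq_scaled_gen_poly)
next
  case S1inv
  then show ?thesis
    using minv_mu_s1_form[OF tt_nonzero one_plus_tt_nonzero]
    by (simp add: mu_s1_eq_scaled_gen_poly to_fract.map_power to_fract_var_t
        del: msmult.simps minv.simps)
next
  case S2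
  then show ?thesis
    by (simp add: mu_s2_def to_fract_var_t)
next
  case S2inv
  then show ?thesis
    using tt_nonzero by (simp add: mu_s2_def to_fract_var_t field_simps)
qed

lemma evalMu_eq_scaled_gen_poly:
  "\<exists>c. c \<noteq> 0 \<and> evalMu w = msmult c (mat2_map to_fract (eval_word gen_poly w))"
proof (induction w)
  case Nil
  then show ?case
    by (intro exI[of _ 1]) (simp add: evalMu_eq_eval_word to_fract.mat2_map_mid)
next
  case (Cons g w)
  then obtain c where "c \<noteq> 0" "evalMu w = msmult c (mat2_map to_fract (eval_word gen_poly w))"
    by blast
  then show ?case
    using gen_mu_scale_nonzero[of g]
    by (intro exI[of _ "gen_mu_scale g * c"])
      (simp add: evalMu_eq_eval_word gen_mu_eq_scaled_gen_poly to_fract.mat2_map_mmul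
        mmul_msmult_left mmul_msmult_right msmult_msmult mult.commute)
qed

lemma proj_equiv_gen_poly_if_pgl_eq:
  assumes "pgl_eq (evalMu w) (evalMu v)"
  shows "proj_equiv (\<lambda>k. k \<noteq> 0)
    (mat2_map to_fract (eval_word gen_poly w)) (mat2_map to_fract (eval_word gen_poly v))"
proof -
  obtain u where "u \<noteq> 0" "evalMu w = msmult u (evalMu v)"
    using assms unfolding pgl_eq_def R_unit_def by blast
  moreover obtain c where "c \<noteq> 0" "evalMu w = msmult c (mat2_map to_fract (eval_word gen_poly w))"
    using evalMu_eq_scaled_gen_poly by blast
  moreover obtain c' where "c' \<noteq> 0" "evalMu v = msmult c' (mat2_map to_fract (eval_word gen_poly v))"
    using evalMu_eq_scaled_gen_poly by blast
  ultimately show ?thesis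
    unfolding proj_equiv_def by (metis msmult_msmult mult_eq_0_iff)
qed

text \<open>At t = -2 the polynomial forms of s1 s2 s1 and s1 s2 evaluate to 2 * letter_pp LA and
  letter_pp LB; b^-1 is represented by the adjugate of b.\<close>

definition gen_pp :: "gen \<Rightarrow> int mat2" where
  "gen_pp g = mat2_map (\<lambda>p. poly p (-2)) (gen_poly g)"

fun letter_pp :: "letter \<Rightarrow> int mat2" where
  "letter_pp LA = (2, 2, -3, -2)"
| "letter_pp LB = (-4, -4, 3, 2)"
| "letter_pp LB_inv = (2, 4, -3, -4)"

interpretation ping_pong: Z2_Z3_proj_rep "\<lambda>k::int. k \<noteq> 0" letter_pp gen_pp
proof unfold_locales
  fix x y g
  show "proj_equiv (\<lambda>k::int. k \<noteq> 0) (eval_word letter_pp (letter_mult x [y]))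
      (mmul (letter_pp x) (letter_pp y))"
    by (cases x; cases y) (simp_all add: proj_equiv_def mid_def, presburger+)
  show "proj_equiv (\<lambda>k::int. k \<noteq> 0) (eval_word letter_pp (gen_letters g)) (gen_pp g)"
    by (cases g) (simp_all add: proj_equiv_def mid_def gen_pp_def var_t_def, presburger+)
qed auto

lemma wedge_gen_pp_eq_0_if_pgl_eq:
  assumes "pgl_eq (evalMu w) (evalMu v)"
  shows "wedge (mat2_apply (eval_word gen_pp w) (1, 1)) (mat2_apply (eval_word gen_pp v) (1, 1)) = 0"
proof -
  have "wedge (mat2_apply (mat2_map to_fract (eval_word gen_poly w)) (1, 1))
      (mat2_apply (mat2_map to_fract (eval_word gen_poly v)) (1, 1)) = 0"
    using wedge_eq_0_if_proj_equiv[OF proj_equiv_sym[OF proj_equiv_gen_poly_if_pgl_eq[OF assms]]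
        proj_equiv_refl]
    by simp
  then have "wedge (mat2_apply (eval_word gen_poly w) (1, 1)) (mat2_apply (eval_word gen_poly v) (1, 1)) = 0"
    by (simp add: to_fract.wedge_mat2_map)
  then have "wedge (mat2_apply (mat2_map (\<lambda>p. poly p (-2)) (eval_word gen_poly w)) (1, 1))
      (mat2_apply (mat2_map (\<lambda>p. poly p (-2)) (eval_word gen_poly v)) (1, 1)) = 0"
    by (simp add: eval_at_minus_2.wedge_mat2_map)
  then show ?thesis
    by (simp add: eval_at_minus_2.mat2_map_eval_word gen_pp_def[abs_def] comp_def)
qed

fun region :: "letter \<Rightarrow> int \<times> int \<Rightarrow> bool" where
  "region LA = in_double_cone (3, 4) (-5, 6)"
| "region LB_inv = in_double_cone (-5, 6) (-11, 7)"
| "region LB = in_double_cone (-11, 7) (-6, -5)"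

lemma region_nonzero: "region x v \<Longrightarrow> v \<noteq> (0, 0)"
  by (cases x) (auto simp: in_double_cone_def)

lemma region_parallel: "region x v \<Longrightarrow> wedge v v' = 0 \<Longrightarrow> v' \<noteq> (0, 0) \<Longrightarrow> region x v'"
  by (cases x) (auto intro: in_double_cone_parallel)

lemma region_unique: "region x v \<Longrightarrow> region y v \<Longrightarrow> x = y"
  by (cases v; cases x; cases y) (auto simp: in_double_cone_def)

lemma base_point_not_in_region: "\<not> region x (1, 1)"
  by (cases x) (auto simp: in_double_cone_def)

lemma region_base_point: "region x (mat2_apply (letter_pp x) (1, 1))"
  by (cases x) (auto simp: in_double_cone_def)

lemma region_ping_pong:
  "(x = LA) \<noteq> (y = LA) \<Longrightarrow> region y v \<Longrightarrow> region x (mat2_apply (letter_pp x) v)"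
  by (cases v; cases x; cases y) (auto simp: in_double_cone_def)

definition pp_point :: "letter list \<Rightarrow> int \<times> int" where
  "pp_point n = mat2_apply (eval_word letter_pp n) (1, 1)"

lemma pp_point_Nil [simp]: "pp_point [] = (1, 1)"
  by (simp add: pp_point_def mid_def)

lemma pp_point_Cons: "pp_point (x # n) = mat2_apply (letter_pp x) (pp_point n)"
  by (simp add: pp_point_def mat2_apply_mmul)

lemma region_pp_point: "reduced (x # n) \<Longrightarrow> region x (pp_point (x # n))"
proof (induction n arbitrary: x)
  case Nil
  then show ?case
    by (simp add: pp_point_def region_base_point)
next
  case (Cons y n)
  then show ?case
    by (simp add: reduced_def pp_point_Cons[of x] region_ping_pong)
qed

lemma pp_point_not_parallel_base_point:
  assumes "reduced (x # n)"
  shows "wedge (pp_point (x # n)) (1, 1) \<noteq> 0"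
proof
  assume "wedge (pp_point (x # n)) (1, 1) = 0"
  then have "region x (1, 1)"
    using region_parallel[OF region_pp_point[OF assms]] by simp
  then show False
    using base_point_not_in_region by blast
qed

lemma reduced_eq_if_pp_points_parallel:
  assumes "reduced n" "reduced n'" "wedge (pp_point n) (pp_point n') = 0"
  shows "n = n'"
  using assms
proof (induction n arbitrary: n')
  case Nil
  then show ?case
    by (cases n') (simp_all, metis pp_point_not_parallel_base_point wedge_eq_0_commute)
next
  case (Cons x n)
  show ?case
  proof (cases n')
    case Nil
    then show ?thesis
      using Cons.prems pp_point_not_parallel_base_point by auto
  next
    fix y n''
    assume n': "n' = y # n''"
    have in_x: "region x (pp_point (x # n))"
      using Cons.prems(1) by (rule region_pp_point)
    have in_y: "region y (pp_point n')"
      using Cons.prems(2) n' by (simp add: region_pp_point)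
    have "region x (pp_point n')"
      using region_parallel[OF in_x Cons.prems(3) region_nonzero[OF in_y]] .
    then have "x = y"
      using in_y by (rule region_unique)
    then have "mdet (letter_pp x) * wedge (pp_point n) (pp_point n'') = 0"
      using Cons.prems(3) n' by (simp add: pp_point_Cons wedge_mat2_apply)
    moreover have "mdet (letter_pp x) \<noteq> 0"
      by (cases x) simp_all
    moreover have "reduced n" "reduced n''"
      using Cons.prems n' by (auto dest: reduced_ConsD)
    ultimately show ?thesis
      using Cons.IH \<open>x = y\<close> n' by simp
  qed
qed

theorem lemma3p14:
  fixes w v :: "gen list"
  assumes "pgl_eq (evalMu w) (evalMu v)"
  shows "psl_eq (evalZ w) (evalZ v)"
proof -
  have "wedge (mat2_apply (eval_word gen_pp w) (1, 1)) (mat2_apply (eval_word gen_pp v) (1, 1)) = 0"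
    using assms by (rule wedge_gen_pp_eq_0_if_pgl_eq)
  then have "wedge (pp_point (normal_form w)) (pp_point (normal_form v)) = 0"
    unfolding pp_point_def
    by (rule wedge_eq_0_if_proj_equiv[OF proj_equiv_sym[OF ping_pong.eval_normal_form]
          proj_equiv_sym[OF ping_pong.eval_normal_form]])
  then have "normal_form w = normal_form v"
    by (intro reduced_eq_if_pp_points_parallel reduced_normal_form)
  then show ?thesis
    by (rule psl_eq_if_normal_form_eq)
qed

end
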